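(* Let $X$ be a $T_1$ topological space and regard $X\subseteq\beta_\circ^F X$ via $x\mapsto\mathcal{U}_x=\{Z\in Z[C_c(X)_F]: x\in Z\}$. Then every maximal ideal $M$ of $C_c(X)_F$ is of the form $M^p=\{f\in C_c(X)_F: p\in \mathrm{Cl}_{\beta_\circ^F X}Z(f)\}$ for some $p\in\beta_\circ^F X$ (namely $p=Z[M]$).
   Context: $C_c(X)_F$ denotes the set of all functions $f:X\to\mathbb{R}$ whose range is countable and whose set of points of discontinuity is finite. $Z(f)=\{x:f(x)=0\}$, $Z[M]=\{Z(f):f\in M\}$, $Z[C_c(X)_F]=\{Z(f):f\in C_c(X)_F\}$. A $(\mathcal{Z}_c)_F$-filter on $X$ is a nonempty family $\mathcal{F}\subseteq Z[C_c(X)_F]$ with $\emptyset\notin\mathcal{F}$, closed under finite intersections and upward closed within $Z[C_c(X)_F]$; a $(\mathcal{Z}_c)_F$-ultrafilter is a maximal one. $\beta_\circ^F X$ is the set of all $(\mathcal{Z}_c)_F$-ultrafilters on $X$ with the topology having as base for closed sets the sets $\overline{Z}=\{\mathcal{U}: Z\in\mathcal{U}\}$, $Z\in Z[C_c(X)_F]$. For $Z\subseteq X$ (identified with a subset of $\beta_\circ^F X$), $\mathrm{Cl}_{\beta_\circ^F X}Z$ is its closure there. *)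

theory Defs
  imports "HOL-Analysis.Analysis"
begin

definition cont_at :: "'a topology \<Rightarrow> ('a \<Rightarrow> real) \<Rightarrow> 'a \<Rightarrow> bool" where
  "cont_at X f x \<longleftrightarrow> (\<forall>V. open V \<and> f x \<in> V \<longrightarrow>
      (\<exists>U. openin X U \<and> x \<in> U \<and> f ` U \<subseteq> V))"

definition CcF :: "'a topology \<Rightarrow> ('a \<Rightarrow> real) set" where
  "CcF X = {f. (\<forall>x. x \<notin> topspace X \<longrightarrow> f x = 0)
              \<and> countable (f ` topspace X)
              \<and> finite {x \<in> topspace X. \<not> cont_at X f x}}"

definition CcF_ideal :: "'a topology \<Rightarrow> ('a \<Rightarrow> real) set \<Rightarrow> bool" where
  "CcF_ideal X I \<longleftrightarrow> I \<subseteq> CcF X \<and> (\<lambda>x. 0) \<in> I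
     \<and> (\<forall>f\<in>I. \<forall>g\<in>I. (\<lambda>x. f x - g x) \<in> I)
     \<and> (\<forall>f\<in>CcF X. \<forall>g\<in>I. (\<lambda>x. f x * g x) \<in> I)"

definition CcF_maximal_ideal :: "'a topology \<Rightarrow> ('a \<Rightarrow> real) set \<Rightarrow> bool" where
  "CcF_maximal_ideal X M \<longleftrightarrow> CcF_ideal X M \<and> M \<noteq> CcF X
     \<and> (\<forall>I. CcF_ideal X I \<and> M \<subseteq> I \<longrightarrow> I = M \<or> I = CcF X)"

definition Zs :: "'a topology \<Rightarrow> ('a \<Rightarrow> real) \<Rightarrow> 'a set" where
  "Zs X f = {x \<in> topspace X. f x = 0}"

definition ZF :: "'a topology \<Rightarrow> 'a set set" where
  "ZF X = Zs X ` CcF X"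

definition ZcF_filter :: "'a topology \<Rightarrow> 'a set set \<Rightarrow> bool" where
  "ZcF_filter X \<F> \<longleftrightarrow> \<F> \<noteq> {} \<and> \<F> \<subseteq> ZF X \<and> {} \<notin> \<F>
     \<and> (\<forall>A\<in>\<F>. \<forall>B\<in>\<F>. A \<inter> B \<in> \<F>)
     \<and> (\<forall>A\<in>\<F>. \<forall>B\<in>ZF X. A \<subseteq> B \<longrightarrow> B \<in> \<F>)"

definition ZcF_ultrafilter :: "'a topology \<Rightarrow> 'a set set \<Rightarrow> bool" where
  "ZcF_ultrafilter X \<U> \<longleftrightarrow> ZcF_filter X \<U>
     \<and> (\<forall>\<F>. ZcF_filter X \<F> \<and> \<U> \<subseteq> \<F> \<longrightarrow> \<F> = \<U>)"

definition betaF :: "'a topology \<Rightarrow> 'a set set set" where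
  "betaF X = {\<U>. ZcF_ultrafilter X \<U>}"

definition basic_closed :: "'a topology \<Rightarrow> 'a set \<Rightarrow> 'a set set set" where
  "basic_closed X Z = {\<U> \<in> betaF X. Z \<in> \<U>}"

text \<open>Topology on beta_o^F X whose base for closed sets is the family of basic closed sets:
  generated by their complements (within beta_o^F X).\<close>
definition betaF_top :: "'a topology \<Rightarrow> 'a set set topology" where
  "betaF_top X = subtopology
      (topology_generated_by {- basic_closed X Z | Z. Z \<in> ZF X}) (betaF X)"

definition point_ultra :: "'a topology \<Rightarrow> 'a \<Rightarrow> 'a set set" where
  "point_ultra X x = {Z \<in> ZF X. x \<in> Z}"

definition Mp :: "'a topology \<Rightarrow> 'a set set \<Rightarrow> ('a \<Rightarrow> real) set" where
  "Mp X p = {f \<in> CcF X. p \<in> (betaF_top X) closure_of (point_ultra X ` Zs X f)}"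

end

theory Submission
  imports Defs
begin

text \<open>For every \<open>(\<Z>\<^sub>c)\<^sub>F\<close>-filter \<open>\<F>\<close>, \<open>Z\<^sup>-\<^sup>1[\<F>]\<close> is a proper ideal. If \<open>M\<close> is maximal and
  \<open>Z[M] \<subseteq> \<F>\<close>, maximality forces \<open>Z\<^sup>-\<^sup>1[\<F>] = M\<close>; applied to the filter generated by \<open>Z[M]\<close>
  this shows that \<open>Z[M]\<close> is itself a filter, and applied to a larger filter that \<open>Z[M]\<close> is
  an ultrafilter with \<open>M = Z\<^sup>-\<^sup>1[Z[M]]\<close>. On the topological side, the sets \<open>\<overline>Z\<close> are closed and
  every neighbourhood of \<open>p\<close> contains some \<open>\<overline>Z'\<close> with \<open>Z' \<in> p\<close>; since the point
  ultrafilters lie in \<open>\<beta>\<^sub>\<circ>\<^sup>F X\<close> (here \<open>T\<^sub>1\<close> is used), \<open>p\<close> is in the closure of a zero set \<open>Z\<close>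
  exactly when \<open>Z \<in> p\<close>. Hence \<open>M\<^sup>p = Z\<^sup>-\<^sup>1[p]\<close>.\<close>

subsection \<open>The ring \<open>C\<^sub>c(X)\<^sub>F\<close>\<close>

lemma cont_at_compose2:
  assumes f: "cont_at X f x" and g: "cont_at X g x" and h: "isCont h (f x, g x)"
  shows "cont_at X (\<lambda>y. h (f y, g y)) x"
  unfolding cont_at_def
proof (intro allI impI)
  fix V :: "real set" assume V: "open V \<and> h (f x, g x) \<in> V"
  then obtain S where S: "open S" "(f x, g x) \<in> S" "\<forall>z\<in>S. h z \<in> V"
    using h unfolding continuous_at_open by blast
  then obtain A B where AB: "open A" "open B" "(f x, g x) \<in> A \<times> B" "A \<times> B \<subseteq> S"
    by (metis open_prod_elim)
  obtain U1 where U1: "openin X U1" "x \<in> U1" "f ` U1 \<subseteq> A"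
    using f AB unfolding cont_at_def by auto
  obtain U2 where U2: "openin X U2" "x \<in> U2" "g ` U2 \<subseteq> B"
    using g AB unfolding cont_at_def by auto
  have "(\<lambda>y. h (f y, g y)) ` (U1 \<inter> U2) \<subseteq> V"
    using U1 U2 AB S by auto
  then show "\<exists>U. openin X U \<and> x \<in> U \<and> (\<lambda>y. h (f y, g y)) ` U \<subseteq> V"
    using U1 U2 by (meson IntI openin_Int)
qed

lemma cont_at_locally_constant:
  assumes "openin X U" "x \<in> U" "\<And>z. z \<in> U \<Longrightarrow> f z = f x"
  shows "cont_at X f x"
  unfolding cont_at_def
proof (intro allI impI)
  fix V :: "real set" assume "open V \<and> f x \<in> V"
  then have "f ` U \<subseteq> V" using assms(3) by auto
  then show "\<exists>U. openin X U \<and> x \<in> U \<and> f ` U \<subseteq> V" using assms(1,2) by blast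
qed

lemma CcF_compose2:
  assumes f: "f \<in> CcF X" and g: "g \<in> CcF X" and h0: "h (0, 0) = 0"
    and h: "\<And>x. x \<in> topspace X \<Longrightarrow> isCont h (f x, g x)"
  shows "(\<lambda>x. h (f x, g x)) \<in> CcF X"
proof -
  let ?T = "topspace X"
  have "(\<lambda>x. h (f x, g x)) ` ?T \<subseteq> h ` (f ` ?T \<times> g ` ?T)" by auto
  moreover have "countable (h ` (f ` ?T \<times> g ` ?T))"
    using f g unfolding CcF_def by auto
  ultimately have "countable ((\<lambda>x. h (f x, g x)) ` ?T)" by (rule countable_subset)
  moreover have "{x \<in> ?T. \<not> cont_at X (\<lambda>x. h (f x, g x)) x}
      \<subseteq> {x \<in> ?T. \<not> cont_at X f x} \<union> {x \<in> ?T. \<not> cont_at X g x}"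
    using cont_at_compose2[of X f _ g h] h by auto
  ultimately show ?thesis
    using f g h0 unfolding CcF_def by (auto intro: finite_subset)
qed

lemma CcF_diff: "f \<in> CcF X \<Longrightarrow> g \<in> CcF X \<Longrightarrow> (\<lambda>x. f x - g x) \<in> CcF X"
  using CcF_compose2[of f X g "\<lambda>p. fst p - snd p"] by (simp add: continuous_intros)

lemma CcF_mult: "f \<in> CcF X \<Longrightarrow> g \<in> CcF X \<Longrightarrow> (\<lambda>x. f x * g x) \<in> CcF X"
  using CcF_compose2[of f X g "\<lambda>p. fst p * snd p"] by (simp add: continuous_intros)

lemma CcF_add: "f \<in> CcF X \<Longrightarrow> g \<in> CcF X \<Longrightarrow> (\<lambda>x. f x + g x) \<in> CcF X"
  using CcF_compose2[of f X g "\<lambda>p. fst p + snd p"] by (simp add: continuous_intros)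

lemma CcF_inverse:
  assumes "f \<in> CcF X" "Zs X f = {}"
  shows "(\<lambda>x. inverse (f x)) \<in> CcF X"
proof -
  have "isCont (\<lambda>p. inverse (fst p)) (f x, f x)" if "x \<in> topspace X" for x
    using that assms(2) unfolding Zs_def by (intro continuous_intros) auto
  then show ?thesis using CcF_compose2[OF assms(1) assms(1), of "\<lambda>p. inverse (fst p)"] by simp
qed

lemma CcF_indicator:
  assumes S: "openin X S" and fin: "finite (topspace X - S)"
  shows "(indicator S :: 'a \<Rightarrow> real) \<in> CcF X"
proof -
  have "indicator S ` topspace X \<subseteq> {0, 1 :: real}" by (auto simp: indicator_def)
  then have "countable ((indicator S :: 'a \<Rightarrow> real) ` topspace X)"
    by (rule countable_subset) auto
  moreover have "cont_at X (indicator S) x" if "x \<in> S" for x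
    using cont_at_locally_constant[OF S that] that by (simp add: indicator_def)
  then have "{x \<in> topspace X. \<not> cont_at X (indicator S) x} \<subseteq> topspace X - S" by blast
  ultimately show ?thesis
    using fin openin_subset[OF S] unfolding CcF_def
    by (auto simp: indicator_def intro: finite_subset)
qed

lemma Zs_indicator: "S \<subseteq> topspace X \<Longrightarrow> Zs X (indicator S) = topspace X - S"
  unfolding Zs_def by auto

lemma CcF_indicator_topspace: "(indicator (topspace X) :: 'a \<Rightarrow> real) \<in> CcF X"
  by (rule CcF_indicator) auto

lemma CcF_zero: "(\<lambda>x. 0) \<in> CcF X"
  using CcF_diff[OF CcF_indicator_topspace CcF_indicator_topspace, of X] by simp

lemma CcF_inverse_mult_self:
  assumes "f \<in> CcF X" "Zs X f = {}"
  shows "(\<lambda>x. inverse (f x) * f x) = indicator (topspace X)"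
proof
  fix x show "inverse (f x) * f x = indicator (topspace X) x"
    using assms unfolding Zs_def CcF_def by (cases "x \<in> topspace X") auto
qed

subsection \<open>Zero sets and \<open>(\<Z>\<^sub>c)\<^sub>F\<close>-filters\<close>

lemma Zs_subset_topspace: "Zs X f \<subseteq> topspace X"
  unfolding Zs_def by auto

lemma ZF_subset_topspace: "Z \<in> ZF X \<Longrightarrow> Z \<subseteq> topspace X"
  unfolding ZF_def Zs_def by auto

lemma Zs_in_ZF: "f \<in> CcF X \<Longrightarrow> Zs X f \<in> ZF X"
  unfolding ZF_def by blast

lemma Zs_sum_squares: "Zs X (\<lambda>x. f x * f x + g x * g x) = Zs X f \<inter> Zs X g"
  unfolding Zs_def by (auto simp: sum_squares_eq_zero_iff)

lemma ZF_Int: "A \<in> ZF X \<Longrightarrow> B \<in> ZF X \<Longrightarrow> A \<inter> B \<in> ZF X"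
proof -
  assume "A \<in> ZF X" "B \<in> ZF X"
  then obtain f g where "f \<in> CcF X" "g \<in> CcF X" "A = Zs X f" "B = Zs X g"
    unfolding ZF_def by blast
  then show ?thesis
    using Zs_in_ZF[of "\<lambda>x. f x * f x + g x * g x" X] Zs_sum_squares[of X f g]
    by (simp add: CcF_add CcF_mult)
qed

lemma ZF_empty: "{} \<in> ZF X"
  using Zs_in_ZF[OF CcF_indicator_topspace, of X] Zs_indicator[of "topspace X" X] by simp

lemma ZF_topspace: "topspace X \<in> ZF X"
  using Zs_in_ZF[OF CcF_zero, of X] unfolding Zs_def by simp

lemma ZcF_filter_subset_ZF: "ZcF_filter X F \<Longrightarrow> A \<in> F \<Longrightarrow> A \<in> ZF X"
  unfolding ZcF_filter_def by auto

lemma ZcF_filter_empty_notin: "ZcF_filter X F \<Longrightarrow> {} \<notin> F"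
  unfolding ZcF_filter_def by blast

lemma ZcF_filter_Int: "ZcF_filter X F \<Longrightarrow> A \<in> F \<Longrightarrow> B \<in> F \<Longrightarrow> A \<inter> B \<in> F"
  unfolding ZcF_filter_def by blast

lemma ZcF_filter_mono: "ZcF_filter X F \<Longrightarrow> A \<in> F \<Longrightarrow> B \<in> ZF X \<Longrightarrow> A \<subseteq> B \<Longrightarrow> B \<in> F"
  unfolding ZcF_filter_def by blast

lemma ZcF_filter_topspace: "ZcF_filter X F \<Longrightarrow> topspace X \<in> F"
  unfolding ZcF_filter_def using ZF_topspace ZF_subset_topspace by blast

lemma betaF_ZcF_filter: "p \<in> betaF X \<Longrightarrow> ZcF_filter X p"
  unfolding betaF_def ZcF_ultrafilter_def by blast

lemma ZcF_ultrafilter_disjoint_member: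
  assumes p: "ZcF_ultrafilter X p" and Z0: "Z0 \<in> ZF X" "Z0 \<notin> p"
  shows "\<exists>Z\<in>p. Z \<inter> Z0 = {}"
proof (rule ccontr)
  assume meets: "\<not> (\<exists>Z\<in>p. Z \<inter> Z0 = {})"
  have pf: "ZcF_filter X p" using p unfolding ZcF_ultrafilter_def by auto
  define F where "F = {B \<in> ZF X. \<exists>Z\<in>p. Z \<inter> Z0 \<subseteq> B}"
  have "ZcF_filter X F" unfolding ZcF_filter_def
  proof (intro conjI ballI impI)
    show "F \<noteq> {}" unfolding F_def using Z0 ZcF_filter_topspace[OF pf] by blast
    show "F \<subseteq> ZF X" "{} \<notin> F" unfolding F_def using meets by auto
  next
    fix A B assume "A \<in> F" "B \<in> F"
    then obtain Z1 Z2 where "Z1 \<in> p" "Z2 \<in> p" "Z1 \<inter> Z0 \<subseteq> A" "Z2 \<inter> Z0 \<subseteq> B"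
      and "A \<in> ZF X" "B \<in> ZF X"
      unfolding F_def by auto
    moreover have "Z1 \<inter> Z2 \<in> p" using ZcF_filter_Int[OF pf \<open>Z1 \<in> p\<close> \<open>Z2 \<in> p\<close>] .
    ultimately show "A \<inter> B \<in> F" unfolding F_def using ZF_Int by blast
  next
    fix A B assume "A \<in> F" "B \<in> ZF X" "A \<subseteq> B"
    then show "B \<in> F" unfolding F_def by blast
  qed
  moreover have "p \<subseteq> F"
    unfolding F_def using ZcF_filter_subset_ZF[OF pf] by blast
  ultimately have "F = p" using p unfolding ZcF_ultrafilter_def by blast
  moreover have "Z0 \<in> F" unfolding F_def using Z0 ZcF_filter_topspace[OF pf] by blast
  ultimately show False using Z0 by auto
qed

subsection \<open>Ideals and \<open>(\<Z>\<^sub>c)\<^sub>F\<close>-filters\<close>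

definition ideal_of_zfilter :: "'a topology \<Rightarrow> 'a set set \<Rightarrow> ('a \<Rightarrow> real) set" where
  "ideal_of_zfilter X F = {f \<in> CcF X. Zs X f \<in> F}"

definition zfilter_of_ideal :: "'a topology \<Rightarrow> ('a \<Rightarrow> real) set \<Rightarrow> 'a set set" where
  "zfilter_of_ideal X I = {B \<in> ZF X. \<exists>f\<in>I. Zs X f \<subseteq> B}"

lemma CcF_ideal_ideal_of_zfilter:
  assumes F: "ZcF_filter X F"
  shows "CcF_ideal X (ideal_of_zfilter X F)"
  unfolding CcF_ideal_def
proof (intro conjI ballI)
  show "ideal_of_zfilter X F \<subseteq> CcF X" unfolding ideal_of_zfilter_def by auto
  show "(\<lambda>x. 0) \<in> ideal_of_zfilter X F"
    unfolding ideal_of_zfilter_def Zs_def using CcF_zero ZcF_filter_topspace[OF F] by simp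
next
  fix f g assume f: "f \<in> ideal_of_zfilter X F" and g: "g \<in> ideal_of_zfilter X F"
  then have d: "(\<lambda>x. f x - g x) \<in> CcF X" using CcF_diff unfolding ideal_of_zfilter_def by auto
  have "Zs X f \<inter> Zs X g \<in> F"
    using f g ZcF_filter_Int[OF F] unfolding ideal_of_zfilter_def by auto
  moreover have "Zs X f \<inter> Zs X g \<subseteq> Zs X (\<lambda>x. f x - g x)" unfolding Zs_def by auto
  ultimately show "(\<lambda>x. f x - g x) \<in> ideal_of_zfilter X F"
    using d ZcF_filter_mono[OF F] Zs_in_ZF unfolding ideal_of_zfilter_def by blast
next
  fix f g assume f: "f \<in> CcF X" and g: "g \<in> ideal_of_zfilter X F"
  then have d: "(\<lambda>x. f x * g x) \<in> CcF X" using CcF_mult unfolding ideal_of_zfilter_def by auto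
  have "Zs X g \<subseteq> Zs X (\<lambda>x. f x * g x)" unfolding Zs_def by auto
  then show "(\<lambda>x. f x * g x) \<in> ideal_of_zfilter X F"
    using d g ZcF_filter_mono[OF F] Zs_in_ZF unfolding ideal_of_zfilter_def by blast
qed

lemma ideal_of_zfilter_neq_CcF:
  assumes "ZcF_filter X F"
  shows "ideal_of_zfilter X F \<noteq> CcF X"
proof
  assume "ideal_of_zfilter X F = CcF X"
  then have "Zs X (indicator (topspace X)) \<in> F"
    using CcF_indicator_topspace unfolding ideal_of_zfilter_def by blast
  then show False
    using Zs_indicator[of "topspace X" X] ZcF_filter_empty_notin[OF assms] by simp
qed

lemma CcF_ideal_subset: "CcF_ideal X I \<Longrightarrow> I \<subseteq> CcF X"
  unfolding CcF_ideal_def by blast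

lemma CcF_ideal_mult: "CcF_ideal X I \<Longrightarrow> f \<in> CcF X \<Longrightarrow> g \<in> I \<Longrightarrow> (\<lambda>x. f x * g x) \<in> I"
  unfolding CcF_ideal_def by blast

lemma CcF_ideal_zero: "CcF_ideal X I \<Longrightarrow> (\<lambda>x. 0) \<in> I"
  unfolding CcF_ideal_def by blast

lemma CcF_ideal_diff: "CcF_ideal X I \<Longrightarrow> f \<in> I \<Longrightarrow> g \<in> I \<Longrightarrow> (\<lambda>x. f x - g x) \<in> I"
  unfolding CcF_ideal_def by blast

lemma CcF_ideal_add:
  assumes I: "CcF_ideal X I" and f: "f \<in> I" and g: "g \<in> I"
  shows "(\<lambda>x. f x + g x) \<in> I"
  using CcF_ideal_diff[OF I f CcF_ideal_diff[OF I CcF_ideal_zero[OF I] g]] by simp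

lemma CcF_ideal_indicator_topspace:
  assumes I: "CcF_ideal X I" and one: "indicator (topspace X) \<in> I"
  shows "I = CcF X"
proof
  show "CcF X \<subseteq> I"
  proof
    fix g assume g: "g \<in> CcF X"
    have "(\<lambda>x. g x * indicator (topspace X) x) = g"
      using g unfolding CcF_def by (intro ext) (auto simp: indicator_def)
    then show "g \<in> I" using CcF_ideal_mult[OF I g one] by simp
  qed
qed (rule CcF_ideal_subset[OF I])

lemma Zs_nonempty_if_in_proper_ideal:
  assumes I: "CcF_ideal X I" "I \<noteq> CcF X" and f: "f \<in> I"
  shows "Zs X f \<noteq> {}"
proof
  assume Z: "Zs X f = {}"
  have fC: "f \<in> CcF X" using CcF_ideal_subset[OF I(1)] f by blast
  have "(\<lambda>x. inverse (f x) * f x) \<in> I"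
    using CcF_ideal_mult[OF I(1) CcF_inverse[OF fC Z] f] .
  then have "indicator (topspace X) \<in> I" using CcF_inverse_mult_self[OF fC Z] by simp
  then have "I = CcF X" by (rule CcF_ideal_indicator_topspace[OF I(1)])
  with I(2) show False by contradiction
qed

lemma ZcF_filter_zfilter_of_ideal:
  assumes I: "CcF_ideal X I" "I \<noteq> CcF X"
  shows "ZcF_filter X (zfilter_of_ideal X I)"
  unfolding ZcF_filter_def
proof (intro conjI ballI impI)
  have "\<exists>f\<in>I. Zs X f \<subseteq> topspace X"
    by (rule bexI[OF Zs_subset_topspace CcF_ideal_zero[OF I(1)]])
  then have "topspace X \<in> zfilter_of_ideal X I"
    unfolding zfilter_of_ideal_def using ZF_topspace by simp
  then show "zfilter_of_ideal X I \<noteq> {}" by auto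
  show "zfilter_of_ideal X I \<subseteq> ZF X" unfolding zfilter_of_ideal_def by auto
  show "{} \<notin> zfilter_of_ideal X I"
    unfolding zfilter_of_ideal_def using Zs_nonempty_if_in_proper_ideal[OF I] by auto
next
  fix A B assume "A \<in> zfilter_of_ideal X I" "B \<in> zfilter_of_ideal X I"
  then obtain f g where f: "f \<in> I" "Zs X f \<subseteq> A" and g: "g \<in> I" "Zs X g \<subseteq> B"
    and AB: "A \<in> ZF X" "B \<in> ZF X"
    unfolding zfilter_of_ideal_def by auto
  have "f \<in> CcF X" "g \<in> CcF X" using CcF_ideal_subset[OF I(1)] f g by auto
  then have "(\<lambda>x. f x * f x) \<in> I" "(\<lambda>x. g x * g x) \<in> I"
    using CcF_ideal_mult[OF I(1)] f g by auto
  then have "(\<lambda>x. f x * f x + g x * g x) \<in> I" by (rule CcF_ideal_add[OF I(1)])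
  moreover have "Zs X (\<lambda>x. f x * f x + g x * g x) \<subseteq> A \<inter> B"
    unfolding Zs_sum_squares using f g by auto
  ultimately show "A \<inter> B \<in> zfilter_of_ideal X I"
    unfolding zfilter_of_ideal_def using ZF_Int[OF AB] by auto
next
  fix A B assume "A \<in> zfilter_of_ideal X I" "B \<in> ZF X" "A \<subseteq> B"
  then show "B \<in> zfilter_of_ideal X I" unfolding zfilter_of_ideal_def by blast
qed

lemma Zs_image_ideal_of_zfilter:
  assumes F: "ZcF_filter X F"
  shows "Zs X ` ideal_of_zfilter X F = F"
proof
  show "Zs X ` ideal_of_zfilter X F \<subseteq> F" unfolding ideal_of_zfilter_def by auto
  show "F \<subseteq> Zs X ` ideal_of_zfilter X F"
  proof
    fix B assume B: "B \<in> F"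
    then obtain g where "g \<in> CcF X" "B = Zs X g"
      using ZcF_filter_subset_ZF[OF F B] unfolding ZF_def by blast
    then show "B \<in> Zs X ` ideal_of_zfilter X F" using B unfolding ideal_of_zfilter_def by blast
  qed
qed

lemma maximal_ideal_eq_ideal_of_zfilter:
  assumes M: "CcF_maximal_ideal X M" and F: "ZcF_filter X F"
    and MF: "\<And>f. f \<in> M \<Longrightarrow> Zs X f \<in> F"
  shows "ideal_of_zfilter X F = M"
proof -
  have ideal: "CcF_ideal X M"
    and max: "\<And>I. CcF_ideal X I \<Longrightarrow> M \<subseteq> I \<Longrightarrow> I = M \<or> I = CcF X"
    using M unfolding CcF_maximal_ideal_def by auto
  have "M \<subseteq> ideal_of_zfilter X F"
    using CcF_ideal_subset[OF ideal] MF unfolding ideal_of_zfilter_def by auto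
  then have "ideal_of_zfilter X F = M \<or> ideal_of_zfilter X F = CcF X"
    by (rule max[OF CcF_ideal_ideal_of_zfilter[OF F]])
  then show ?thesis using ideal_of_zfilter_neq_CcF[OF F] by simp
qed

lemma Zs_image_maximal_ideal:
  assumes M: "CcF_maximal_ideal X M"
  shows "Zs X ` M = zfilter_of_ideal X M"
proof -
  have I: "CcF_ideal X M" "M \<noteq> CcF X" using M unfolding CcF_maximal_ideal_def by auto
  have F: "ZcF_filter X (zfilter_of_ideal X M)" by (rule ZcF_filter_zfilter_of_ideal[OF I])
  have "ideal_of_zfilter X (zfilter_of_ideal X M) = M"
    using CcF_ideal_subset[OF I(1)]
    by (intro maximal_ideal_eq_ideal_of_zfilter[OF M F])
      (auto simp: zfilter_of_ideal_def Zs_in_ZF)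
  then show ?thesis using Zs_image_ideal_of_zfilter[OF F] by simp
qed

lemma ZcF_ultrafilter_Zs_image_maximal_ideal:
  assumes M: "CcF_maximal_ideal X M"
  shows "ZcF_ultrafilter X (Zs X ` M)"
  unfolding ZcF_ultrafilter_def
proof (intro conjI allI impI)
  have "CcF_ideal X M" "M \<noteq> CcF X" using M unfolding CcF_maximal_ideal_def by auto
  then show "ZcF_filter X (Zs X ` M)"
    using ZcF_filter_zfilter_of_ideal Zs_image_maximal_ideal[OF M] by simp
next
  fix F assume "ZcF_filter X F \<and> Zs X ` M \<subseteq> F"
  then have F: "ZcF_filter X F" and MF: "Zs X ` M \<subseteq> F" by auto
  have "ideal_of_zfilter X F = M"
    using MF by (intro maximal_ideal_eq_ideal_of_zfilter[OF M F]) auto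
  then show "F = Zs X ` M" using Zs_image_ideal_of_zfilter[OF F] by simp
qed

subsection \<open>Closures in \<open>\<beta>\<^sub>\<circ>\<^sup>F X\<close>\<close>

lemma basic_closed_Int:
  assumes "A \<in> ZF X" "B \<in> ZF X"
  shows "basic_closed X (A \<inter> B) = basic_closed X A \<inter> basic_closed X B"
proof
  show "basic_closed X (A \<inter> B) \<subseteq> basic_closed X A \<inter> basic_closed X B"
  proof
    fix q assume "q \<in> basic_closed X (A \<inter> B)"
    then have q: "q \<in> betaF X" "A \<inter> B \<in> q" unfolding basic_closed_def by auto
    then have "A \<in> q" "B \<in> q"
      using ZcF_filter_mono[OF betaF_ZcF_filter[OF q(1)] q(2)] assms by auto
    then show "q \<in> basic_closed X A \<inter> basic_closed X B"
      using q(1) unfolding basic_closed_def by simp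
  qed
  show "basic_closed X A \<inter> basic_closed X B \<subseteq> basic_closed X (A \<inter> B)"
    unfolding basic_closed_def using ZcF_filter_Int[OF betaF_ZcF_filter] by auto
qed

lemma basic_closed_empty: "basic_closed X {} = {}"
  unfolding basic_closed_def using betaF_ZcF_filter ZcF_filter_empty_notin by blast

lemma topspace_betaF_top: "topspace (betaF_top X) = betaF X"
proof -
  have "UNIV \<in> {- basic_closed X Z | Z. Z \<in> ZF X}"
    using ZF_empty basic_closed_empty by fastforce
  then show ?thesis
    unfolding betaF_top_def topspace_subtopology topology_generated_by_topspace by blast
qed

lemma openin_betaF_top_compl_basic_closed:
  "Z \<in> ZF X \<Longrightarrow> openin (betaF_top X) (betaF X - basic_closed X Z)"
  unfolding betaF_top_def openin_subtopology
  by (intro exI[of _ "- basic_closed X Z"] conjI topology_generated_by_Basis) auto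

lemma generate_betaF_basic_nbhd:
  assumes "generate_topology_on {- basic_closed X Z | Z. Z \<in> ZF X} V"
    and "p \<in> betaF X" "p \<in> V"
  shows "\<exists>Z\<in>p. basic_closed X Z \<subseteq> V"
  using assms
proof (induction arbitrary: p)
  case Empty then show ?case by auto
next
  case (Int a b)
  then obtain Z1 Z2 where Z: "Z1 \<in> p" "Z2 \<in> p" "basic_closed X Z1 \<subseteq> a" "basic_closed X Z2 \<subseteq> b"
    by blast
  have pf: "ZcF_filter X p" using Int.prems(1) by (rule betaF_ZcF_filter)
  have "Z1 \<inter> Z2 \<in> p" using ZcF_filter_Int[OF pf Z(1,2)] .
  moreover have "basic_closed X (Z1 \<inter> Z2) \<subseteq> a \<inter> b"
    using basic_closed_Int[OF ZcF_filter_subset_ZF[OF pf Z(1)] ZcF_filter_subset_ZF[OF pf Z(2)]]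
      Z(3,4) by auto
  ultimately show ?case by blast
next
  case (UN K)
  then show ?case by blast
next
  case (Basis s)
  then obtain Z0 where Z0: "Z0 \<in> ZF X" "s = - basic_closed X Z0" by auto
  then have "Z0 \<notin> p" using Basis.prems unfolding basic_closed_def by auto
  then obtain Z where Z: "Z \<in> p" "Z \<inter> Z0 = {}"
    using ZcF_ultrafilter_disjoint_member Basis.prems Z0 unfolding betaF_def by blast
  have "Z \<in> ZF X" using ZcF_filter_subset_ZF[OF betaF_ZcF_filter[OF Basis.prems(1)] Z(1)] .
  then have "basic_closed X Z \<inter> basic_closed X Z0 = {}"
    using basic_closed_Int[OF _ Z0(1), of Z] Z(2) basic_closed_empty[of X] by simp
  then show ?case using Z Z0 by blast
qed

lemma betaF_top_basic_nbhd:
  assumes "openin (betaF_top X) W" "p \<in> W"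
  shows "\<exists>Z\<in>p. basic_closed X Z \<subseteq> W"
proof -
  obtain V where V: "generate_topology_on {- basic_closed X Z | Z. Z \<in> ZF X} V" "W = V \<inter> betaF X"
    using assms(1) unfolding betaF_top_def openin_subtopology openin_topology_generated_by_iff
    by auto
  then obtain Z where "Z \<in> p" "basic_closed X Z \<subseteq> V"
    using generate_betaF_basic_nbhd assms(2) by blast
  then show ?thesis using V(2) unfolding basic_closed_def by blast
qed

lemma point_ultra_in_betaF:
  assumes t1: "t1_space X" and x: "x \<in> topspace X"
  shows "point_ultra X x \<in> betaF X"
proof -
  let ?U = "point_ultra X x"
  have fil: "ZcF_filter X ?U"
    unfolding ZcF_filter_def point_ultra_def using ZF_topspace x ZF_Int by blast
  have "openin X (topspace X - {x})"
    using t1 x unfolding t1_space_closedin_singleton by (simp add: openin_diff)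
  moreover have "finite (topspace X - (topspace X - {x}))"
    by (rule finite_subset[of _ "{x}"]) auto
  ultimately have "Zs X (indicator (topspace X - {x})) \<in> ZF X"
    by (intro Zs_in_ZF CcF_indicator)
  moreover have "Zs X (indicator (topspace X - {x})) = {x}"
    using Zs_indicator[of "topspace X - {x}" X] x by auto
  ultimately have sing: "{x} \<in> ?U" unfolding point_ultra_def by simp
  have "F \<subseteq> ?U" if F: "ZcF_filter X F" "?U \<subseteq> F" for F
  proof
    fix Z assume Z: "Z \<in> F"
    then have "{x} \<inter> Z \<in> F" using sing F ZcF_filter_Int by blast
    then have "x \<in> Z" using ZcF_filter_empty_notin[OF F(1)] by (cases "x \<in> Z") auto
    then show "Z \<in> ?U" using ZcF_filter_subset_ZF[OF F(1) Z] unfolding point_ultra_def by auto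
  qed
  then show ?thesis using fil unfolding betaF_def ZcF_ultrafilter_def by blast
qed

lemma closedin_betaF_top_basic_closed:
  assumes "Z \<in> ZF X"
  shows "closedin (betaF_top X) (basic_closed X Z)"
proof -
  have "basic_closed X Z \<subseteq> betaF X" unfolding basic_closed_def by auto
  then show ?thesis
    using openin_betaF_top_compl_basic_closed[OF assms]
    unfolding closedin_def topspace_betaF_top by simp
qed

lemma point_ultra_in_basic_closed:
  assumes "t1_space X" "Z \<in> ZF X" "x \<in> Z"
  shows "point_ultra X x \<in> basic_closed X Z"
  using point_ultra_in_betaF[OF assms(1)] ZF_subset_topspace assms(2,3)
  unfolding basic_closed_def point_ultra_def by auto

lemma in_closure_of_point_ultra_iff:
  assumes t1: "t1_space X" and p: "p \<in> betaF X" and Z: "Z \<in> ZF X"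
  shows "p \<in> betaF_top X closure_of (point_ultra X ` Z) \<longleftrightarrow> Z \<in> p"
proof
  assume "p \<in> betaF_top X closure_of (point_ultra X ` Z)"
  moreover have "betaF_top X closure_of (point_ultra X ` Z) \<subseteq> basic_closed X Z"
    using point_ultra_in_basic_closed[OF t1 Z] closedin_betaF_top_basic_closed[OF Z]
    by (intro closure_of_minimal) auto
  ultimately show "Z \<in> p" unfolding basic_closed_def by auto
next
  assume Zp: "Z \<in> p"
  have pf: "ZcF_filter X p" using p by (rule betaF_ZcF_filter)
  show "p \<in> betaF_top X closure_of (point_ultra X ` Z)"
    unfolding in_closure_of topspace_betaF_top
  proof (intro conjI allI impI p)
    fix W assume W: "p \<in> W \<and> openin (betaF_top X) W"
    then obtain Z' where Z': "Z' \<in> p" "basic_closed X Z' \<subseteq> W"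
      using betaF_top_basic_nbhd by blast
    have "Z' \<inter> Z \<in> p" by (rule ZcF_filter_Int[OF pf Z'(1) Zp])
    then have "Z' \<inter> Z \<noteq> {}" using ZcF_filter_empty_notin[OF pf] by metis
    then obtain x where x: "x \<in> Z'" "x \<in> Z" by blast
    then have "point_ultra X x \<in> W"
      using point_ultra_in_basic_closed[OF t1 ZcF_filter_subset_ZF[OF pf Z'(1)]] Z'(2) by blast
    then show "\<exists>y. y \<in> point_ultra X ` Z \<and> y \<in> W" using x(2) by blast
  qed
qed

lemma Mp_eq_ideal_of_zfilter:
  assumes "t1_space X" "p \<in> betaF X"
  shows "Mp X p = ideal_of_zfilter X p"
  unfolding Mp_def ideal_of_zfilter_def
  using in_closure_of_point_ultra_iff[OF assms Zs_in_ZF] by auto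

theorem theorem4p4:
  fixes X :: "'a topology" and M :: "('a \<Rightarrow> real) set"
  assumes "t1_space X"
    and "CcF_maximal_ideal X M"
  shows "(\<exists>p \<in> betaF X. M = Mp X p) \<and> Zs X ` M \<in> betaF X \<and> M = Mp X (Zs X ` M)"
proof -
  have ultra: "ZcF_ultrafilter X (Zs X ` M)"
    using assms(2) by (rule ZcF_ultrafilter_Zs_image_maximal_ideal)
  then have p: "Zs X ` M \<in> betaF X" unfolding betaF_def by simp
  have "ideal_of_zfilter X (Zs X ` M) = M"
    using ultra unfolding ZcF_ultrafilter_def
    by (intro maximal_ideal_eq_ideal_of_zfilter[OF assms(2)]) auto
  then have "M = Mp X (Zs X ` M)"
    using Mp_eq_ideal_of_zfilter[OF assms(1) p] by simp
  then show ?thesis using p by blast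
qed

end
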